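(* Let $\tau$ be a Polish topology on $I(\mathbb N)$ making it a topological inverse semigroup, such that the map $2^{\mathbb N}\to(I(\mathbb N),\tau)$, $A\mapsto 1_A$, is continuous. Let $Y$ be a countable set with $\mathbb N\subseteq Y$ and $Y\setminus\mathbb N$ infinite, and let $f_k,f\in S_\infty(Y)$ with $f_k\to f$ in $S_\infty(Y)$. Then there is a dense $G_\delta$ set $G\subseteq S_\infty(Y)$ such that $\widehat{f_k}\circ\widehat g\to\widehat f\circ\widehat g$ in $\tau$ for all $g\in G$.
   Context: $I(\mathbb N)$ is the set of all bijections $f:A\to B$ with $A,B\subseteq\mathbb N$ (including the empty map), with composition $\mathrm{dom}(f\circ g)=g^{-1}(\mathrm{dom}(f)\cap\mathrm{im}(g))$ and inversion $f\mapsto f^{-1}$; $1_A$ is the identity on $A$. $2^{\mathbb N}$ is the Cantor space (power set with product topology). $S_\infty(Y)$ is the group of all bijections $Y\to Y$ with the topology of pointwise convergence ($Y$ discrete). For $h\in S_\infty(Y)$, $\widehat h\in I(\mathbb N)$ is the restriction of $h$ to $\mathbb N\cap h^{-1}(\mathbb N)$. A topological inverse semigroup has continuous multiplication and inversion. *)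

theory Defs
  imports "HOL-Analysis.Analysis"
begin

text \<open>Partial bijections of nat, represented as partial maps nat to nat option
  that are injective on their domain.  The carrier of I(N).\<close>
type_synonym pbij = "nat \<Rightarrow> nat option"

definition IN :: "pbij set" where
  "IN = {f. inj_on f (dom f)}"

text \<open>Composition (f o g): first g then f; dom = g^-1(dom f \<inter> im g).\<close>
definition pcomp :: "pbij \<Rightarrow> pbij \<Rightarrow> pbij" where
  "pcomp f g = f \<circ>\<^sub>m g"

definition pinv :: "pbij \<Rightarrow> pbij" where
  "pinv f = (\<lambda>y. if y \<in> ran f then Some (THE x. f x = Some y) else None)"

text \<open>The partial identity 1_A, with A given by its characteristic function (Cantor space).\<close>
definition pid :: "(nat \<Rightarrow> bool) \<Rightarrow> pbij" where
  "pid A = (\<lambda>n. if A n then Some n else None)"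

definition cantor_space :: "(nat \<Rightarrow> bool) topology" where
  "cantor_space = product_topology (\<lambda>_. discrete_topology UNIV) UNIV"

definition Polish_space :: "'a topology \<Rightarrow> bool" where
  "Polish_space X \<longleftrightarrow> completely_metrizable_space X \<and> separable_space X"

definition topological_inverse_semigroup_IN :: "pbij topology \<Rightarrow> bool" where
  "topological_inverse_semigroup_IN T \<longleftrightarrow>
     topspace T = IN \<and>
     continuous_map (prod_topology T T) T (\<lambda>(f, g). pcomp f g) \<and>
     continuous_map T T pinv"

text \<open>S_infinity(Y): bijections of Y (extensional, i.e. undefined outside Y) with the
  topology of pointwise convergence, Y discrete.\<close>
definition Sinf :: "'a set \<Rightarrow> ('a \<Rightarrow> 'a) topology" where
  "Sinf Y = subtopology (product_topology (\<lambda>_. discrete_topology Y) Y)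
                        {h \<in> extensional Y. bij_betw h Y Y}"

text \<open>N is embedded into Y via an injection e.  hat h is the restriction of h
  to N \<inter> h^-1(N), as a partial bijection of N.\<close>
definition hat :: "(nat \<Rightarrow> 'a) \<Rightarrow> ('a \<Rightarrow> 'a) \<Rightarrow> pbij" where
  "hat e h = (\<lambda>n. if h (e n) \<in> range e then Some (inv e (h (e n))) else None)"

end

theory Submission
  imports Defs
begin

text \<open>The map \<open>\<Phi> u = hat e (f \<circ> u)\<close> from \<open>S\<^sub>\<infinity>(Y)\<close> to \<open>(I(\<nat>), \<tau>)\<close> is the pointwise
  limit of the maps \<open>u \<mapsto> \<Phi> u \<circ> 1\<^bsub>{0..<n}\<^esub>\<close>: these are locally constant, since they depend
  on finitely many values of \<open>u\<close>, and they converge because \<open>1\<^bsub>{0..<n}\<^esub> \<rightarrow> 1\<^sub>\<nat>\<close> in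
  \<open>2\<^sup>\<nat>\<close> and composition is continuous. By the Baire category theorem a pointwise limit of
  continuous maps from a completely metrizable space to a metric space is continuous on a
  dense \<open>G\<^sub>\<delta>\<close> set \<open>G\<close>. For \<open>g \<in> G\<close> the bijections \<open>f\<^sup>-\<^sup>1 \<circ> f\<^sub>k \<circ> g\<close> converge to \<open>g\<close>, so
  \<open>hat (f\<^sub>k \<circ> g) = \<Phi> (f\<^sup>-\<^sup>1 \<circ> f\<^sub>k \<circ> g) \<rightarrow> \<Phi> g = hat (f \<circ> g)\<close>, and composing on the right with
  the partial identity of \<open>\<nat> \<inter> g\<^sup>-\<^sup>1(\<nat>)\<close> turns this into \<open>hat f\<^sub>k \<circ> hat g \<rightarrow> hat f \<circ> hat g\<close>.\<close>

lemma limitin_discrete_topology: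
  "limitin (discrete_topology U) a l F \<longleftrightarrow> l \<in> U \<and> eventually (\<lambda>x. a x = l) F"
proof
  assume lim: "limitin (discrete_topology U) a l F"
  then have "l \<in> U" using limitin_topspace by fastforce
  moreover have "openin (discrete_topology U) {l}"
    using \<open>l \<in> U\<close> by simp
  then have "eventually (\<lambda>x. a x \<in> {l}) F"
    using lim unfolding limitin_def by blast
  ultimately show "l \<in> U \<and> eventually (\<lambda>x. a x = l) F" by simp
next
  assume "l \<in> U \<and> eventually (\<lambda>x. a x = l) F"
  then show "limitin (discrete_topology U) a l F"
    unfolding limitin_def by (auto elim: eventually_mono)
qed

lemma continuous_map_locally_constant:
  assumes "\<And>x. x \<in> topspace X \<Longrightarrow> \<phi> x \<in> topspace T"
    and "\<And>x. x \<in> topspace X \<Longrightarrow> \<exists>W. openin X W \<and> x \<in> W \<and> (\<forall>y\<in>W. \<phi> y = \<phi> x)"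
  shows "continuous_map X T \<phi>"
  unfolding continuous_map_def
proof (intro conjI allI impI)
  show "\<phi> \<in> topspace X \<rightarrow> topspace T" using assms(1) by auto
  fix U assume "openin T U"
  show "openin X {x \<in> topspace X. \<phi> x \<in> U}"
  proof (subst openin_subopen, intro ballI)
    fix x assume x: "x \<in> {x \<in> topspace X. \<phi> x \<in> U}"
    then obtain W where W: "openin X W" "x \<in> W" "\<forall>y\<in>W. \<phi> y = \<phi> x"
      using assms(2) by blast
    have "W \<subseteq> {x \<in> topspace X. \<phi> x \<in> U}"
    proof
      fix y assume "y \<in> W"
      then have "y \<in> topspace X" "\<phi> y = \<phi> x"
        using W openin_subset by blast+
      then show "y \<in> {x \<in> topspace X. \<phi> x \<in> U}" using x by simp
    qed
    then show "\<exists>T. openin X T \<and> x \<in> T \<and> T \<subseteq> {x \<in> topspace X. \<phi> x \<in> U}"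
      using W by blast
  qed
qed

lemma closure_of_Diff_Un_interior_of:
  "X closure_of ((topspace X - E) \<union> X interior_of E) = topspace X"
proof (rule subset_antisym[OF closure_of_subset_topspace])
  have "X interior_of E \<subseteq> X closure_of (X interior_of E)"
    by (rule closure_of_subset[OF interior_of_subset_topspace])
  then show "topspace X \<subseteq> X closure_of ((topspace X - E) \<union> X interior_of E)"
    unfolding closure_of_Un closure_of_complement by blast
qed

subsection \<open>Continuity points of a pointwise limit of continuous maps\<close>

locale pointwise_limit = Metric_space M d for M and d :: "'b \<Rightarrow> 'b \<Rightarrow> real" +
  fixes X :: "'a topology" and \<phi> :: "nat \<Rightarrow> 'a \<Rightarrow> 'b" and \<Phi> :: "'a \<Rightarrow> 'b"
  assumes continuous_map_approx: "continuous_map X mtopology (\<phi> n)"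
    and limitin_approx: "x \<in> topspace X \<Longrightarrow> limitin mtopology (\<lambda>n. \<phi> n x) (\<Phi> x) sequentially"
begin

lemma approx_in_M: "x \<in> topspace X \<Longrightarrow> \<phi> n x \<in> M"
  using continuous_map_image_subset_topspace[OF continuous_map_approx] by fastforce

lemma limit_in_M: "x \<in> topspace X \<Longrightarrow> \<Phi> x \<in> M"
  using limitin_approx limitin_mspace by blast

definition small_tail :: "real \<Rightarrow> nat \<Rightarrow> 'a set" where
  "small_tail \<epsilon> N = {x \<in> topspace X. \<forall>p\<ge>N. \<forall>q\<ge>N. d (\<phi> p x) (\<phi> q x) \<le> \<epsilon>}"

lemma closedin_small_tail: "closedin X (small_tail \<epsilon> N)"
proof -
  have "continuous_map X euclidean (\<lambda>x. d (\<phi> p x) (\<phi> q x))" for p q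
    using continuous_map_mdist[of X "metric (M, d)" "\<phi> p" "\<phi> q"] continuous_map_approx
    by simp
  then have C: "closedin X {x \<in> topspace X. d (\<phi> p x) (\<phi> q x) \<in> {..\<epsilon>}}" for p q
    by (rule closedin_continuous_map_preimage) simp
  have "small_tail \<epsilon> N =
      (\<Inter>p\<in>{N..}. \<Inter>q\<in>{N..}. {x \<in> topspace X. d (\<phi> p x) (\<phi> q x) \<in> {..\<epsilon>}})"
    unfolding small_tail_def by auto
  then show ?thesis
    by (simp only:) (intro closedin_INT C; simp)
qed

lemma eventually_dist_approx_less:
  assumes "x \<in> topspace X" and "\<delta> > 0"
  shows "eventually (\<lambda>n. d (\<phi> n x) (\<Phi> x) < \<delta>) sequentially"
proof -
  have "eventually (\<lambda>n. \<phi> n x \<in> M \<and> d (\<phi> n x) (\<Phi> x) < \<delta>) sequentially"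
    using limitin_approx[OF assms(1)] assms(2) unfolding limitin_metric by blast
  then show ?thesis by (rule eventually_mono) simp
qed

lemma small_tail_covers:
  assumes x: "x \<in> topspace X" and "\<epsilon> > 0"
  obtains N where "x \<in> small_tail \<epsilon> N"
proof -
  obtain N where N: "\<And>n. n \<ge> N \<Longrightarrow> d (\<phi> n x) (\<Phi> x) < \<epsilon> / 2"
    using eventually_dist_approx_less[OF x, of "\<epsilon> / 2"] \<open>\<epsilon> > 0\<close>
    unfolding eventually_sequentially by auto
  have "d (\<phi> p x) (\<phi> q x) \<le> \<epsilon>" if "p \<ge> N" "q \<ge> N" for p q
  proof -
    have "d (\<phi> p x) (\<phi> q x) \<le> d (\<phi> p x) (\<Phi> x) + d (\<phi> q x) (\<Phi> x)"
      using triangle' approx_in_M limit_in_M x by blast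
    then show ?thesis using N[OF that(1)] N[OF that(2)] by linarith
  qed
  then show ?thesis using that x unfolding small_tail_def by blast
qed

lemma dist_limit_le_small_tail:
  assumes y: "y \<in> small_tail \<epsilon> N"
  shows "d (\<phi> N y) (\<Phi> y) \<le> \<epsilon>"
proof -
  have yX: "y \<in> topspace X" using y unfolding small_tail_def by blast
  have "eventually (\<lambda>q. \<phi> q y \<in> mcball (\<phi> N y) \<epsilon>) sequentially"
    using y approx_in_M[OF yX] unfolding small_tail_def eventually_sequentially by auto
  then have "\<Phi> y \<in> mcball (\<phi> N y) \<epsilon>"
    by (intro limitin_closedin[OF limitin_approx[OF yX]]) auto
  then show ?thesis by simp
qed

lemma limitin_at_interior_small_tails:
  assumes x: "x \<in> topspace X" and interior: "\<And>\<epsilon>. \<epsilon> > 0 \<Longrightarrow> \<exists>N. x \<in> X interior_of small_tail \<epsilon> N"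
    and xs: "limitin X xs x sequentially"
  shows "limitin mtopology (\<lambda>k. \<Phi> (xs k)) (\<Phi> x) sequentially"
  unfolding limitin_metric
proof (intro conjI allI impI limit_in_M x)
  fix \<epsilon> :: real assume "\<epsilon> > 0"
  then obtain N where N: "x \<in> X interior_of small_tail (\<epsilon> / 3) N"
    using interior[of "\<epsilon> / 3"] by auto
  have tail_x: "x \<in> small_tail (\<epsilon> / 3) N"
    using interior_of_subset N by (rule subsetD)
  have ev_interior: "eventually (\<lambda>k. xs k \<in> X interior_of small_tail (\<epsilon> / 3) N) sequentially"
    using xs N openin_interior_of unfolding limitin_def by blast
  have "limitin mtopology (\<lambda>k. \<phi> N (xs k)) (\<phi> N x) sequentially"
    using continuous_map_limit[OF continuous_map_approx xs] by (simp add: o_def)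
  moreover have "\<epsilon> / 3 > 0" using \<open>\<epsilon> > 0\<close> by simp
  ultimately have "eventually (\<lambda>k. \<phi> N (xs k) \<in> M \<and> d (\<phi> N (xs k)) (\<phi> N x) < \<epsilon> / 3) sequentially"
    unfolding limitin_metric by blast
  with ev_interior show "eventually (\<lambda>k. \<Phi> (xs k) \<in> M \<and> d (\<Phi> (xs k)) (\<Phi> x) < \<epsilon>) sequentially"
  proof eventually_elim
    case (elim k)
    have tail: "xs k \<in> small_tail (\<epsilon> / 3) N"
      using interior_of_subset elim(1) by (rule subsetD)
    then have xk: "xs k \<in> topspace X" unfolding small_tail_def by blast
    have "d (\<Phi> (xs k)) (\<Phi> x) \<le> d (\<phi> N (xs k)) (\<Phi> (xs k)) + d (\<phi> N (xs k)) (\<Phi> x)"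
      using triangle''[of "\<Phi> (xs k)" "\<phi> N (xs k)" "\<Phi> x"] approx_in_M limit_in_M x xk by blast
    moreover have "d (\<phi> N (xs k)) (\<Phi> x) \<le> d (\<phi> N (xs k)) (\<phi> N x) + d (\<phi> N x) (\<Phi> x)"
      using triangle[of "\<phi> N (xs k)" "\<phi> N x" "\<Phi> x"] approx_in_M limit_in_M x xk by blast
    moreover have "d (\<phi> N (xs k)) (\<Phi> (xs k)) \<le> \<epsilon> / 3" "d (\<phi> N x) (\<Phi> x) \<le> \<epsilon> / 3"
      using dist_limit_le_small_tail[OF tail] dist_limit_le_small_tail[OF tail_x] .
    ultimately have "d (\<Phi> (xs k)) (\<Phi> x) < \<epsilon>"
      using conjunct2[OF elim(2)] by linarith
    then show ?case using limit_in_M[OF xk] by simp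
  qed
qed

text \<open>The continuity points are those lying in the interior of every \<open>small_tail\<close> set that
  contains them; they form a dense \<open>G\<^sub>\<delta>\<close> because a closed set differs from its interior
  by a nowhere dense set.\<close>

theorem continuity_points_dense_gdelta:
  assumes X: "completely_metrizable_space X"
  obtains G where "gdelta_in X G" "X closure_of G = topspace X"
    "\<And>x xs. x \<in> G \<Longrightarrow> limitin X xs x sequentially \<Longrightarrow>
       limitin mtopology (\<lambda>k. \<Phi> (xs k)) (\<Phi> x) sequentially"
proof -
  define D where "D m N = (topspace X - small_tail (inverse (Suc m)) N)
    \<union> X interior_of small_tail (inverse (Suc m)) N" for m N :: nat
  define G where "G = \<Inter> (range (case_prod D))"
  have openD: "openin X (D m N)" for m N
    unfolding D_def by (intro openin_Un openin_diff openin_topspace openin_interior_of closedin_small_tail)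
  have "gdelta_in X G"
    unfolding G_def using openD by (intro gdelta_in_Inter open_imp_gdelta_in) auto
  moreover have "X closure_of G = topspace X"
    unfolding G_def using X openD
    by (intro Baire_category) (auto simp: D_def closure_of_Diff_Un_interior_of simp del: closure_of_Un)
  moreover have "limitin mtopology (\<lambda>k. \<Phi> (xs k)) (\<Phi> x) sequentially"
    if x: "x \<in> G" and xs: "limitin X xs x sequentially" for x xs
  proof (rule limitin_at_interior_small_tails[OF _ _ xs])
    show xX: "x \<in> topspace X" using limitin_topspace[OF xs] .
    fix \<epsilon> :: real assume "\<epsilon> > 0"
    then obtain m where m: "inverse (Suc m) < \<epsilon>"
      using reals_Archimedean by blast
    obtain N where N: "x \<in> small_tail (inverse (Suc m)) N"
      using small_tail_covers[OF xX] by (metis inverse_positive_iff_positive of_nat_0_less_iff zero_less_Suc)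
    then have "x \<in> X interior_of small_tail (inverse (Suc m)) N"
      using x unfolding G_def D_def by blast
    moreover have "small_tail (inverse (Suc m)) N \<subseteq> small_tail \<epsilon> N"
      using m unfolding small_tail_def by force
    ultimately show "\<exists>N. x \<in> X interior_of small_tail \<epsilon> N"
      using interior_of_mono by blast
  qed
  ultimately show ?thesis using that by blast
qed

end


subsection \<open>The topology of \<open>S\<^sub>\<infinity>(Y)\<close>\<close>

lemma topspace_Sinf: "topspace (Sinf Y) = {h \<in> extensional Y. bij_betw h Y Y}"
  unfolding Sinf_def by (auto simp: PiE_def bij_betw_def)

lemma openin_product_discrete_eq:
  assumes "i \<in> I"
  shows "openin (product_topology (\<lambda>_. discrete_topology U) I)
           {v \<in> topspace (product_topology (\<lambda>_. discrete_topology U) I). v i = c}"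
proof -
  let ?P = "product_topology (\<lambda>_. discrete_topology U) I"
  have proj: "continuous_map ?P (discrete_topology U) (\<lambda>v. v i)"
    using assms by (rule continuous_map_product_projection)
  have "openin ?P {v \<in> topspace ?P. v i \<in> {c} \<inter> U}"
    by (rule openin_continuous_map_preimage[OF proj]) auto
  moreover have "{v \<in> topspace ?P. v i \<in> {c} \<inter> U} = {v \<in> topspace ?P. v i = c}"
    using continuous_map_image_subset_topspace[OF proj] by auto
  ultimately show ?thesis by simp
qed

lemma openin_product_discrete_neq:
  assumes "i \<in> I" "j \<in> I"
  shows "openin (product_topology (\<lambda>_. discrete_topology U) I)
           {v \<in> topspace (product_topology (\<lambda>_. discrete_topology U) I). v i \<noteq> v j}"
proof (subst openin_subopen, intro ballI)
  let ?P = "product_topology (\<lambda>_. discrete_topology U) I"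
  fix h assume h: "h \<in> {v \<in> topspace ?P. v i \<noteq> v j}"
  show "\<exists>W. openin ?P W \<and> h \<in> W \<and> W \<subseteq> {v \<in> topspace ?P. v i \<noteq> v j}"
    by (intro exI[of _ "{v \<in> topspace ?P. v i = h i} \<inter> {v \<in> topspace ?P. v j = h j}"]
        conjI openin_Int openin_product_discrete_eq assms) (use h in auto)
qed

lemma openin_product_discrete_attains:
  "openin (product_topology (\<lambda>_. discrete_topology U) I)
     {v \<in> topspace (product_topology (\<lambda>_. discrete_topology U) I). \<exists>i\<in>I. v i = c}"
proof -
  let ?P = "product_topology (\<lambda>_. discrete_topology U) I"
  have "{v \<in> topspace ?P. \<exists>i\<in>I. v i = c} = (\<Union>i\<in>I. {v \<in> topspace ?P. v i = c})"
    by blast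
  moreover have "openin ?P (\<Union>i\<in>I. {v \<in> topspace ?P. v i = c})"
    by (intro openin_Union) (auto intro: openin_product_discrete_eq simp del: topspace_product_topology)
  ultimately show ?thesis by simp
qed

lemma gdelta_in_bijections:
  assumes "countable Y"
  shows "gdelta_in (product_topology (\<lambda>_. discrete_topology Y) Y) {h \<in> extensional Y. bij_betw h Y Y}"
proof -
  let ?P = "product_topology (\<lambda>_. discrete_topology Y) Y"
  define \<U> where "\<U> = insert (topspace ?P)
    ((\<lambda>(x, x'). {v \<in> topspace ?P. v x \<noteq> v x'}) ` {(x, x') \<in> Y \<times> Y. x \<noteq> x'}
     \<union> (\<lambda>y. {v \<in> topspace ?P. \<exists>x\<in>Y. v x = y}) ` Y)"
  have "countable {(x, x') \<in> Y \<times> Y. x \<noteq> x'}"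
    by (rule countable_subset[of _ "Y \<times> Y"]) (use assms in auto)
  then have "countable \<U>"
    unfolding \<U>_def using assms by simp
  moreover have "gdelta_in ?P U" if "U \<in> \<U>" for U
    using that unfolding \<U>_def
    by (auto intro!: open_imp_gdelta_in openin_product_discrete_neq openin_product_discrete_attains
             simp del: topspace_product_topology)
  moreover have "\<Inter>\<U> = {h \<in> extensional Y. bij_betw h Y Y}"
  proof (intro equalityI subsetI)
    fix h assume h: "h \<in> \<Inter>\<U>"
    then have "inj_on h Y"
      unfolding \<U>_def inj_on_def by blast
    moreover have "Y \<subseteq> h ` Y"
      using h unfolding \<U>_def by blast
    moreover have "h \<in> Y \<rightarrow>\<^sub>E Y"
      using h unfolding \<U>_def by simp
    ultimately show "h \<in> {h \<in> extensional Y. bij_betw h Y Y}"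
      by (auto simp: bij_betw_def PiE_def)
  next
    fix h assume "h \<in> {h \<in> extensional Y. bij_betw h Y Y}"
    then have "h \<in> Y \<rightarrow>\<^sub>E Y" "inj_on h Y" "\<forall>y\<in>Y. \<exists>x\<in>Y. h x = y"
      by (auto simp: bij_betw_def PiE_def) (metis imageE)
    then show "h \<in> \<Inter>\<U>"
      unfolding \<U>_def by (auto simp: inj_on_def)
  qed
  ultimately show ?thesis
    using gdelta_in_Inter[of \<U> ?P] unfolding \<U>_def by auto
qed

lemma completely_metrizable_space_Sinf:
  assumes "countable Y"
  shows "completely_metrizable_space (Sinf Y)"
  unfolding Sinf_def
proof (rule completely_metrizable_space_gdelta_in[OF _ gdelta_in_bijections[OF assms]])
  show "completely_metrizable_space (product_topology (\<lambda>_. discrete_topology Y) Y)"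
    unfolding completely_metrizable_space_product_topology
    using assms by (auto simp: completely_metrizable_space_discrete_topology
        intro: countable_subset[of _ Y])
qed

lemma openin_Sinf_eq:
  assumes "y \<in> Y"
  shows "openin (Sinf Y) {v \<in> topspace (Sinf Y). v y = c}"
proof -
  let ?P = "product_topology (\<lambda>_. discrete_topology Y) Y"
  have "openin ?P {v \<in> topspace ?P. v y = c}"
    using assms by (rule openin_product_discrete_eq)
  moreover have "{v \<in> topspace (Sinf Y). v y = c} =
      {v \<in> topspace ?P. v y = c} \<inter> {h \<in> extensional Y. bij_betw h Y Y}"
    unfolding Sinf_def by auto
  ultimately show ?thesis
    unfolding openin_subtopology Sinf_def by blast
qed

lemma openin_Sinf_agree:
  assumes "finite F" "F \<subseteq> Y"
  shows "openin (Sinf Y) {v \<in> topspace (Sinf Y). \<forall>y\<in>F. v y = u y}"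
proof -
  have "openin (Sinf Y) (topspace (Sinf Y) \<inter> \<Inter>((\<lambda>y. {v \<in> topspace (Sinf Y). v y = u y}) ` F))"
    using assms by (intro openin_Int_Inter openin_topspace) (auto intro: openin_Sinf_eq)
  moreover have "topspace (Sinf Y) \<inter> \<Inter>((\<lambda>y. {v \<in> topspace (Sinf Y). v y = u y}) ` F)
      = {v \<in> topspace (Sinf Y). \<forall>y\<in>F. v y = u y}"
    by auto
  ultimately show ?thesis by simp
qed

lemma limitin_Sinf:
  assumes "eventually (\<lambda>k. u k \<in> topspace (Sinf Y)) F"
  shows "limitin (Sinf Y) u g F \<longleftrightarrow>
    g \<in> topspace (Sinf Y) \<and> (\<forall>y\<in>Y. eventually (\<lambda>k. u k y = g y) F)"
proof -
  let ?P = "product_topology (\<lambda>_. discrete_topology Y) Y"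
  have "eventually (\<lambda>k. u k \<in> topspace ?P) F"
    using assms by (rule eventually_mono) (simp add: Sinf_def)
  then have "limitin ?P u g F \<longleftrightarrow> g \<in> extensional Y \<and> (\<forall>y\<in>Y. g y \<in> Y \<and> eventually (\<lambda>k. u k y = g y) F)"
    unfolding limitin_componentwise limitin_discrete_topology by blast
  moreover have "g \<in> topspace (Sinf Y) \<Longrightarrow> g \<in> extensional Y \<and> (\<forall>y\<in>Y. g y \<in> Y)"
    by (auto simp: topspace_Sinf bij_betw_def)
  moreover have "topspace (Sinf Y) = {h \<in> extensional Y. bij_betw h Y Y}"
    by (rule topspace_Sinf)
  ultimately show ?thesis
    using assms unfolding Sinf_def limitin_subtopology by auto
qed

lemma restrict_inv_comp_in_Sinf:
  assumes "f \<in> topspace (Sinf Y)" "h \<in> topspace (Sinf Y)" "g \<in> topspace (Sinf Y)"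
  shows "restrict (inv_into Y f \<circ> h \<circ> g) Y \<in> topspace (Sinf Y)"
proof -
  have "bij_betw f Y Y" "bij_betw h Y Y" "bij_betw g Y Y"
    using assms by (auto simp: topspace_Sinf)
  then have "bij_betw (inv_into Y f \<circ> h \<circ> g) Y Y"
    by (meson bij_betw_inv_into bij_betw_trans)
  then show ?thesis
    by (simp add: topspace_Sinf bij_betw_cong[of Y "restrict _ Y"])
qed

lemma limitin_Sinf_inv_comp:
  assumes fs: "\<And>k. fs k \<in> topspace (Sinf Y)" and f: "f \<in> topspace (Sinf Y)"
    and g: "g \<in> topspace (Sinf Y)" and lim: "limitin (Sinf Y) fs f F"
  shows "limitin (Sinf Y) (\<lambda>k. restrict (inv_into Y f \<circ> fs k \<circ> g) Y) g F"
proof -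
  have "eventually (\<lambda>k. fs k \<in> topspace (Sinf Y)) F"
    using fs by simp
  then have fs_eventually: "\<forall>y\<in>Y. eventually (\<lambda>k. fs k y = f y) F"
    using lim limitin_Sinf by blast
  have pointwise: "eventually (\<lambda>k. restrict (inv_into Y f \<circ> fs k \<circ> g) Y y = g y) F"
    if y: "y \<in> Y" for y
  proof -
    have gy: "g y \<in> Y" using g y by (auto simp: topspace_Sinf bij_betw_def)
    have "inv_into Y f (f (g y)) = g y"
      using f gy by (auto simp: topspace_Sinf bij_betw_def)
    with y show ?thesis
      by (intro eventually_mono[OF bspec[OF fs_eventually gy]]) simp
  qed
  have "eventually (\<lambda>k. restrict (inv_into Y f \<circ> fs k \<circ> g) Y \<in> topspace (Sinf Y)) F"
    using restrict_inv_comp_in_Sinf[OF f fs g] by simp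
  from limitin_Sinf[OF this] show ?thesis
    using g pointwise by blast
qed

subsection \<open>Partial bijections\<close>

lemma pcomp_in_IN:
  assumes "a \<in> IN" "b \<in> IN"
  shows "pcomp a b \<in> IN"
  using assms unfolding IN_def pcomp_def inj_on_def
  by (auto simp: map_comp_def dom_def split: option.splits)

lemma pid_in_IN: "pid A \<in> IN"
  by (auto simp: IN_def pid_def inj_on_def dom_def split: if_splits)

lemma hat_in_IN:
  assumes "inj_on h Y" "range e \<subseteq> Y" "inj e"
  shows "hat e h \<in> IN"
  unfolding IN_def mem_Collect_eq
proof (rule inj_onI)
  fix a b assume "a \<in> dom (hat e h)" "b \<in> dom (hat e h)" "hat e h a = hat e h b"
  then have ra: "h (e a) \<in> range e" and rb: "h (e b) \<in> range e"
    and eq: "inv e (h (e a)) = inv e (h (e b))"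
    by (auto simp: hat_def dom_def split: if_splits)
  have "h (e a) = h (e b)" using f_inv_into_f[OF ra] f_inv_into_f[OF rb] eq by metis
  then have "e a = e b" using assms(1,2) by (meson inj_onD range_subsetD)
  then show "a = b" using assms(3) by (simp add: inj_eq)
qed

lemma pcomp_Some [simp]: "pcomp a Some = a"
  unfolding pcomp_def by (auto simp: map_comp_def)

lemma pid_True: "pid (\<lambda>_. True) = Some"
  unfolding pid_def by auto

lemma pcomp_hat:
  "pcomp (hat e h) (hat e g) = pcomp (hat e (h \<circ> g)) (pid (\<lambda>n. g (e n) \<in> range e))"
  unfolding pcomp_def pid_def hat_def
  by (rule ext) (auto simp: map_comp_def f_inv_into_f)

lemma pcomp_hat_initial_segment_cong:
  assumes "\<forall>i<n. h (e i) = h' (e i)"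
  shows "pcomp (hat e h) (pid (\<lambda>i. i < n)) = pcomp (hat e h') (pid (\<lambda>i. i < n))"
  unfolding pcomp_def pid_def hat_def
  by (rule ext) (use assms in \<open>auto simp: map_comp_def\<close>)

lemma hat_comp_restrict_inv:
  assumes "bij_betw f Y Y" "range e \<subseteq> Y" "h ` Y \<subseteq> Y"
  shows "hat e (f \<circ> restrict (inv_into Y f \<circ> h) Y) = hat e h"
proof -
  have "(f \<circ> restrict (inv_into Y f \<circ> h) Y) (e n) = h (e n)" for n
    using assms f_inv_into_f[of "h (e n)" f Y] by (auto simp: bij_betw_def)
  then show ?thesis unfolding hat_def by (simp only:)
qed

lemma limitin_pcomp:
  assumes "topological_inverse_semigroup_IN \<tau>"
    and "limitin \<tau> a a0 F" "limitin \<tau> b b0 F"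
  shows "limitin \<tau> (\<lambda>k. pcomp (a k) (b k)) (pcomp a0 b0) F"
proof -
  have "continuous_map (prod_topology \<tau> \<tau>) \<tau> (\<lambda>(f, g). pcomp f g)"
    using assms(1) unfolding topological_inverse_semigroup_IN_def by blast
  moreover have "limitin (prod_topology \<tau> \<tau>) (\<lambda>k. (a k, b k)) (a0, b0) F"
    using assms(2,3) by (simp add: limitin_pairwise o_def)
  ultimately show ?thesis
    by (auto dest: continuous_map_limit simp: o_def)
qed

lemma limitin_pid_initial_segments:
  assumes "continuous_map cantor_space \<tau> pid"
  shows "limitin \<tau> (\<lambda>n. pid (\<lambda>i. i < n)) Some sequentially"
proof -
  have "limitin cantor_space (\<lambda>n i. i < n) (\<lambda>_. True) sequentially"
    unfolding cantor_space_def limitin_componentwise limitin_discrete_topology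
    by (auto simp: eventually_sequentially) (metis Suc_le_eq)
  from continuous_map_limit[OF assms this] show ?thesis
    by (simp add: o_def pid_True)
qed

lemma limitin_pcomp_hat:
  assumes tis: "topological_inverse_semigroup_IN \<tau>"
    and "limitin \<tau> (\<lambda>k. hat e (fs k \<circ> g)) (hat e (f \<circ> g)) F"
  shows "limitin \<tau> (\<lambda>k. pcomp (hat e (fs k)) (hat e g)) (pcomp (hat e f) (hat e g)) F"
proof -
  have "pid (\<lambda>n. g (e n) \<in> range e) \<in> topspace \<tau>"
    using tis pid_in_IN unfolding topological_inverse_semigroup_IN_def by simp
  with assms(2) have "limitin \<tau> (\<lambda>k. pcomp (hat e (fs k \<circ> g)) (pid (\<lambda>n. g (e n) \<in> range e)))
      (pcomp (hat e (f \<circ> g)) (pid (\<lambda>n. g (e n) \<in> range e))) F"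
    by (intro limitin_pcomp[OF tis]) simp_all
  then show ?thesis by (simp add: pcomp_hat)
qed

subsection \<open>The map \<open>u \<mapsto> hat e (f \<circ> u)\<close>\<close>

lemma continuous_map_hat_initial_segment:
  assumes "topological_inverse_semigroup_IN \<tau>" "inj e" "range e \<subseteq> Y"
    and f: "f \<in> topspace (Sinf Y)"
  shows "continuous_map (Sinf Y) \<tau> (\<lambda>u. pcomp (hat e (f \<circ> u)) (pid (\<lambda>i. i < n)))"
proof (rule continuous_map_locally_constant)
  fix u assume u: "u \<in> topspace (Sinf Y)"
  have "inj_on (f \<circ> u) Y"
    using u f by (intro comp_inj_on) (auto simp: topspace_Sinf bij_betw_def)
  then show "pcomp (hat e (f \<circ> u)) (pid (\<lambda>i. i < n)) \<in> topspace \<tau>"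
    using assms(1-3) pcomp_in_IN hat_in_IN pid_in_IN
    unfolding topological_inverse_semigroup_IN_def by blast
  let ?W = "{v \<in> topspace (Sinf Y). \<forall>y\<in>e ` {..<n}. v y = u y}"
  have "openin (Sinf Y) ?W"
    using assms(3) by (intro openin_Sinf_agree) auto
  moreover have "pcomp (hat e (f \<circ> v)) (pid (\<lambda>i. i < n)) = pcomp (hat e (f \<circ> u)) (pid (\<lambda>i. i < n))"
    if "v \<in> ?W" for v
    using that by (intro pcomp_hat_initial_segment_cong) auto
  ultimately show "\<exists>W. openin (Sinf Y) W \<and> u \<in> W \<and>
      (\<forall>v\<in>W. pcomp (hat e (f \<circ> v)) (pid (\<lambda>i. i < n)) = pcomp (hat e (f \<circ> u)) (pid (\<lambda>i. i < n)))"
    using u by blast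
qed

lemma hat_comp_continuity_points:
  assumes "metrizable_space \<tau>" and tis: "topological_inverse_semigroup_IN \<tau>"
    and "continuous_map cantor_space \<tau> pid"
    and "countable Y" "inj e" "range e \<subseteq> Y" and f: "f \<in> topspace (Sinf Y)"
  obtains G where "gdelta_in (Sinf Y) G" "Sinf Y closure_of G = topspace (Sinf Y)"
    "\<And>g us. g \<in> G \<Longrightarrow> limitin (Sinf Y) us g sequentially \<Longrightarrow>
       limitin \<tau> (\<lambda>k. hat e (f \<circ> us k)) (hat e (f \<circ> g)) sequentially"
proof -
  obtain M d where MS: "Metric_space M d" and \<tau>: "\<tau> = Metric_space.mtopology M d"
    using assms(1) unfolding metrizable_space_def by blast
  interpret pointwise_limit M d "Sinf Y"
    "\<lambda>n u. pcomp (hat e (f \<circ> u)) (pid (\<lambda>i. i < n))" "\<lambda>u. hat e (f \<circ> u)"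
  proof (intro pointwise_limit.intro pointwise_limit_axioms.intro MS)
    show "continuous_map (Sinf Y) (Metric_space.mtopology M d) (\<lambda>u. pcomp (hat e (f \<circ> u)) (pid (\<lambda>i. i < n)))" for n
      using continuous_map_hat_initial_segment[OF tis assms(5,6) f] \<tau> by simp
    fix u assume u: "u \<in> topspace (Sinf Y)"
    have "inj_on (f \<circ> u) Y"
      using u f by (intro comp_inj_on) (auto simp: topspace_Sinf bij_betw_def)
    then have "limitin \<tau> (\<lambda>n. hat e (f \<circ> u)) (hat e (f \<circ> u)) sequentially"
      using tis hat_in_IN assms(5,6) unfolding topological_inverse_semigroup_IN_def by simp
    from limitin_pcomp[OF tis this limitin_pid_initial_segments[OF assms(3)]]
    show "limitin (Metric_space.mtopology M d) (\<lambda>n. pcomp (hat e (f \<circ> u)) (pid (\<lambda>i. i < n))) (hat e (f \<circ> u)) sequentially"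
      using \<tau> by simp
  qed
  show ?thesis
    using continuity_points_dense_gdelta[OF completely_metrizable_space_Sinf[OF assms(4)]] that \<tau>
    by metis
qed

theorem lemma6p5:
  fixes \<tau> :: "pbij topology" and Y :: "'a set" and e :: "nat \<Rightarrow> 'a"
    and fs :: "nat \<Rightarrow> 'a \<Rightarrow> 'a" and f :: "'a \<Rightarrow> 'a"
  assumes "Polish_space \<tau>"
    and "topological_inverse_semigroup_IN \<tau>"
    and "continuous_map cantor_space \<tau> pid"
    and "countable Y" and "inj e" and "range e \<subseteq> Y" and "infinite (Y - range e)"
    and "\<And>k. fs k \<in> topspace (Sinf Y)" and "f \<in> topspace (Sinf Y)"
    and "limitin (Sinf Y) fs f sequentially"
  shows "\<exists>G. gdelta_in (Sinf Y) G \<and> (Sinf Y) closure_of G = topspace (Sinf Y) \<and>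
             (\<forall>g\<in>G. limitin \<tau> (\<lambda>k. pcomp (hat e (fs k)) (hat e g))
                                 (pcomp (hat e f) (hat e g)) sequentially)"
proof -
  have "metrizable_space \<tau>"
    using assms(1) completely_metrizable_imp_metrizable_space unfolding Polish_space_def by blast
  then obtain G where G: "gdelta_in (Sinf Y) G" "Sinf Y closure_of G = topspace (Sinf Y)"
    and continuous_at_G: "\<And>g us. g \<in> G \<Longrightarrow> limitin (Sinf Y) us g sequentially \<Longrightarrow>
       limitin \<tau> (\<lambda>k. hat e (f \<circ> us k)) (hat e (f \<circ> g)) sequentially"
    using hat_comp_continuity_points[OF _ assms(2-6,9)] by blast
  have "limitin \<tau> (\<lambda>k. pcomp (hat e (fs k)) (hat e g)) (pcomp (hat e f) (hat e g)) sequentially"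
    if "g \<in> G" for g
  proof (rule limitin_pcomp_hat[OF assms(2)])
    have g: "g \<in> topspace (Sinf Y)" using G(1) gdelta_in_subset that by blast
    have "bij_betw (fs k \<circ> g) Y Y" for k
      using assms(8)[of k] g bij_betw_trans[of g Y Y "fs k" Y] by (simp add: topspace_Sinf)
    then have "hat e (f \<circ> restrict (inv_into Y f \<circ> (fs k \<circ> g)) Y) = hat e (fs k \<circ> g)" for k
      using assms(6,9) by (intro hat_comp_restrict_inv) (auto simp: topspace_Sinf bij_betw_def)
    then show "limitin \<tau> (\<lambda>k. hat e (fs k \<circ> g)) (hat e (f \<circ> g)) sequentially"
      using continuous_at_G[OF that limitin_Sinf_inv_comp[OF assms(8,9) g assms(10)]]
      by (simp add: o_assoc)
  qed
  with G show ?thesis by blast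
qed

end
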